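(* Let $R$ be a root system in $\mathbb{R}^N$, let $R'$ be a positive orthogonal subsystem of $R$, and let $\kappa:R'\to\mathbb{C}$ be any function (multiplicity function). For $\xi\in\mathbb{R}^N$ define the operator $T_\xi$ on the space of polynomial functions on $\mathbb{R}^N$ by $$(T_\xi f)(x)=\partial_\xi f(x)+\sum_{\alpha\in R'}\kappa(\alpha)\langle\alpha,\xi\rangle\frac{f(x)-f(\tau_\alpha x)}{\langle x,\alpha\rangle},\qquad \tau_\alpha(x)=x-\frac{\langle x,\alpha\rangle}{|\alpha|^2}\alpha .$$ Then for all $\xi,\eta\in\mathbb{R}^N$, $[T_\xi,T_\eta]=T_\xi T_\eta-T_\eta T_\xi=0$.
   Context: $\langle\cdot,\cdot\rangle$ is the Euclidean inner product, $|x|=\sqrt{\langle x,x\rangle}$, and $\partial_\xi$ is the directional derivative in direction $\xi$. A root system is a finite set $R\subset\mathbb{R}^N\setminus\{0\}$ with $s_\alpha(R)=R$ and $R\cap\mathbb{R}\alpha=\{\pm\alpha\}$ for all $\alpha\in R$, where $s_\alpha(x)=x-2\frac{\langle x,\alpha\rangle}{|\alpha|^2}\alpha$. A subsystem $R''$ of $R$ is a subset closed under negation and such that $\alpha,\beta\in R''$, $\alpha+\beta\in R$ imply $\alpha+\beta\in R''$; it is orthogonal if it consists of pairwise orthogonal roots (apart from $\pm$ pairs). A positive orthogonal subsystem $R'$ is a subset of an orthogonal subsystem $R''$ with $R''=R'\cup(-R')$, $R'\cap(-R')=\emptyset$. The difference quotients map polynomials to polynomials, so $T_\xi$ maps polynomials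 to polynomials. *)

theory Defs
  imports "HOL-Analysis.Analysis"
begin

definition refl_root :: "real^'n \<Rightarrow> real^'n \<Rightarrow> real^'n" where
  "refl_root \<alpha> x = x - (2 * (x \<bullet> \<alpha>) / (norm \<alpha>)^2) *\<^sub>R \<alpha>"

definition tau_root :: "real^'n \<Rightarrow> real^'n \<Rightarrow> real^'n" where
  "tau_root \<alpha> x = x - ((x \<bullet> \<alpha>) / (norm \<alpha>)^2) *\<^sub>R \<alpha>"

definition root_system :: "(real^'n) set \<Rightarrow> bool" where
  "root_system R \<longleftrightarrow> finite R \<and> 0 \<notin> R \<and>
     (\<forall>\<alpha>\<in>R. refl_root \<alpha> ` R = R) \<and>
     (\<forall>\<alpha>\<in>R. R \<inter> {t *\<^sub>R \<alpha> | t. True} = {\<alpha>, -\<alpha>})"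

definition subsystem :: "(real^'n) set \<Rightarrow> (real^'n) set \<Rightarrow> bool" where
  "subsystem S R \<longleftrightarrow> S \<subseteq> R \<and> (\<forall>\<alpha>\<in>S. -\<alpha> \<in> S) \<and>
     (\<forall>\<alpha>\<in>S. \<forall>\<beta>\<in>S. \<alpha> + \<beta> \<in> R \<longrightarrow> \<alpha> + \<beta> \<in> S)"

definition orthogonal_subsystem :: "(real^'n) set \<Rightarrow> (real^'n) set \<Rightarrow> bool" where
  "orthogonal_subsystem S R \<longleftrightarrow> subsystem S R \<and>
     (\<forall>\<alpha>\<in>S. \<forall>\<beta>\<in>S. \<beta> \<noteq> \<alpha> \<and> \<beta> \<noteq> -\<alpha> \<longrightarrow> \<alpha> \<bullet> \<beta> = 0)"

definition positive_orthogonal_subsystem :: "(real^'n) set \<Rightarrow> (real^'n) set \<Rightarrow> bool" where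
  "positive_orthogonal_subsystem R' R \<longleftrightarrow>
     (\<exists>R''. orthogonal_subsystem R'' R \<and> R' \<subseteq> R'' \<and>
            R'' = R' \<union> uminus ` R' \<and> R' \<inter> uminus ` R' = {})"

inductive_set poly_fun :: "(real^'n \<Rightarrow> complex) set" where
  const: "(\<lambda>x. c) \<in> poly_fun"
| coord: "(\<lambda>x. complex_of_real (x $ i)) \<in> poly_fun"
| add: "f \<in> poly_fun \<Longrightarrow> g \<in> poly_fun \<Longrightarrow> (\<lambda>x. f x + g x) \<in> poly_fun"
| mult: "f \<in> poly_fun \<Longrightarrow> g \<in> poly_fun \<Longrightarrow> (\<lambda>x. f x * g x) \<in> poly_fun"

definition dir_deriv :: "real^'n \<Rightarrow> (real^'n \<Rightarrow> complex) \<Rightarrow> real^'n \<Rightarrow> complex" where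
  "dir_deriv \<xi> f x = vector_derivative (\<lambda>t. f (x + t *\<^sub>R \<xi>)) (at 0)"

text \<open>Difference quotient (f(x) - f(tau_alpha x)) / <x,alpha>, understood as the polynomial
  function which agrees with this quotient off the hyperplane <x,alpha> = 0.\<close>
definition diff_quot :: "real^'n \<Rightarrow> (real^'n \<Rightarrow> complex) \<Rightarrow> real^'n \<Rightarrow> complex" where
  "diff_quot \<alpha> f = (THE g. g \<in> poly_fun \<and>
      (\<forall>x. x \<bullet> \<alpha> \<noteq> 0 \<longrightarrow> g x = (f x - f (tau_root \<alpha> x)) / complex_of_real (x \<bullet> \<alpha>)))"

definition dunkl_T :: "(real^'n \<Rightarrow> complex) \<Rightarrow> (real^'n) set \<Rightarrow> real^'n
    \<Rightarrow> (real^'n \<Rightarrow> complex) \<Rightarrow> real^'n \<Rightarrow> complex" where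
  "dunkl_T \<kappa> R' \<xi> f x = dir_deriv \<xi> f x +
     (\<Sum>\<alpha>\<in>R'. \<kappa> \<alpha> * complex_of_real (\<alpha> \<bullet> \<xi>) * diff_quot \<alpha> f x)"

end

theory Submission
  imports Defs
begin

text \<open>Write \<open>D\<^sub>\<alpha>\<close> for the difference quotient, so that
  \<open>f x - f (\<tau>\<^sub>\<alpha> x) = \<langle>x,\<alpha>\<rangle> D\<^sub>\<alpha> f x\<close>. Expanding \<open>T\<^sub>\<xi> T\<^sub>\<eta> f\<close> gives three kinds of terms:
  \<open>\<partial>\<^sub>\<xi>\<partial>\<^sub>\<eta> f\<close>, which is symmetric; the mixed terms
  \<open>\<langle>\<alpha>,\<eta>\<rangle> \<partial>\<^sub>\<xi> D\<^sub>\<alpha> f + \<langle>\<alpha>,\<xi>\<rangle> D\<^sub>\<alpha> \<partial>\<^sub>\<eta> f\<close>, which are symmetric because the commutator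
  \<open>\<partial>\<^sub>v D\<^sub>\<alpha> - D\<^sub>\<alpha> \<partial>\<^sub>v\<close> depends on \<open>v\<close> only through the factor \<open>\<langle>v,\<alpha>\<rangle>\<close>
  (differentiate the defining identity of \<open>D\<^sub>\<alpha>\<close>, using that \<open>\<tau>\<^sub>\<alpha>\<close> is linear);
  and the terms \<open>\<langle>\<beta>,\<xi>\<rangle>\<langle>\<alpha>,\<eta>\<rangle> D\<^sub>\<beta> D\<^sub>\<alpha> f\<close>, which are symmetric because \<open>D\<^sub>\<alpha>\<close> and
  \<open>D\<^sub>\<beta>\<close> commute for orthogonal \<open>\<alpha>, \<beta>\<close> (then \<open>\<tau>\<^sub>\<alpha>\<close> and \<open>\<tau>\<^sub>\<beta>\<close> commute).
  Every identity between polynomials is first proved after multiplication by a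
  linear form \<open>\<langle>x,\<alpha>\<rangle>\<close> and then cancelled by continuity.\<close>

lemma poly_fun_cmult: "f \<in> poly_fun \<Longrightarrow> (\<lambda>x. c * f x) \<in> poly_fun"
  by (intro poly_fun.mult poly_fun.const)

lemma poly_fun_diff: "f \<in> poly_fun \<Longrightarrow> g \<in> poly_fun \<Longrightarrow> (\<lambda>x. f x - g x) \<in> poly_fun"
  using poly_fun.add[OF _ poly_fun_cmult[of g "-1"], of f] by simp

lemma poly_fun_sum:
  "finite A \<Longrightarrow> (\<And>a. a \<in> A \<Longrightarrow> f a \<in> poly_fun) \<Longrightarrow> (\<lambda>x. \<Sum>a\<in>A. f a x) \<in> poly_fun"
proof (induction A rule: finite_induct)
  case empty
  then show ?case using poly_fun.const[of 0] by simp
next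
  case (insert a A)
  then show ?case using poly_fun.add[of "f a" "\<lambda>x. \<Sum>a\<in>A. f a x"] by simp
qed

lemma poly_fun_inner: "(\<lambda>x. complex_of_real (x \<bullet> v)) \<in> poly_fun"
proof -
  have "(\<lambda>x. \<Sum>i\<in>UNIV. complex_of_real (v $ i) * complex_of_real (x $ i)) \<in> poly_fun"
    by (intro poly_fun_sum poly_fun_cmult poly_fun.coord) auto
  then show ?thesis by (simp add: inner_vec_def mult.commute)
qed

lemma poly_fun_compose_linear:
  assumes "linear L" and "f \<in> poly_fun"
  shows "(\<lambda>x. f (L x)) \<in> poly_fun"
  using assms(2)
proof (induction rule: poly_fun.induct)
  case (coord i)
  have "L x $ i = x \<bullet> (\<chi> j. matrix L $ i $ j)" for x
  proof -
    have "L x = matrix L *v x" using assms(1) by simp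
    then show ?thesis by (simp add: matrix_vector_mult_def inner_vec_def mult.commute)
  qed
  then show ?case using poly_fun_inner by simp
qed (auto intro: poly_fun.intros)

lemma poly_fun_has_derivative_ex:
  "f \<in> poly_fun \<Longrightarrow> \<exists>F. (\<forall>x. (f has_derivative F x) (at x)) \<and> (\<forall>v. (\<lambda>x. F x v) \<in> poly_fun)"
proof (induction rule: poly_fun.induct)
  case (const c)
  show ?case by (rule exI[of _ "\<lambda>x h. 0"]) (auto intro: poly_fun.const)
next
  case (coord i)
  have "((\<lambda>x::real^'a. x $ i) has_derivative (\<lambda>x. x $ i)) (at x)" for x
    by (rule bounded_linear_imp_has_derivative) auto
  then show ?case
    by (intro exI[of _ "\<lambda>x h. complex_of_real (h $ i)"])
      (auto intro: poly_fun.const has_derivative_of_real)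
next
  case (add f g)
  then obtain F G where "\<forall>x. (f has_derivative F x) (at x)" "\<forall>v. (\<lambda>x. F x v) \<in> poly_fun"
    and "\<forall>x. (g has_derivative G x) (at x)" "\<forall>v. (\<lambda>x. G x v) \<in> poly_fun" by blast
  then show ?case
    by (intro exI[of _ "\<lambda>x h. F x h + G x h"]) (auto intro!: has_derivative_add poly_fun.add)
next
  case (mult f g)
  then obtain F G where "\<forall>x. (f has_derivative F x) (at x)" "\<forall>v. (\<lambda>x. F x v) \<in> poly_fun"
    and "\<forall>x. (g has_derivative G x) (at x)" "\<forall>v. (\<lambda>x. G x v) \<in> poly_fun" by blast
  with mult.hyps show ?case
    by (intro exI[of _ "\<lambda>x h. f x * G x h + F x h * g x"])
      (auto intro!: has_derivative_mult poly_fun.add poly_fun.mult)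
qed

lemma has_derivative_poly_fun:
  "f \<in> poly_fun \<Longrightarrow> (f has_derivative frechet_derivative f (at x)) (at x)"
  using poly_fun_has_derivative_ex by (metis differentiable_def frechet_derivative_works)

lemma poly_fun_frechet_derivative:
  assumes "f \<in> poly_fun"
  shows "(\<lambda>x. frechet_derivative f (at x) v) \<in> poly_fun"
proof -
  obtain F where F: "\<forall>x. (f has_derivative F x) (at x)" "\<forall>v. (\<lambda>x. F x v) \<in> poly_fun"
    using poly_fun_has_derivative_ex[OF assms] by blast
  have "frechet_derivative f (at x) = F x" for x
    using F(1) has_derivative_poly_fun[OF assms] has_derivative_unique by blast
  then show ?thesis using F(2) by simp
qed

lemma dir_deriv_eq_has_derivative:
  assumes g: "(g has_derivative G) (at x)"
  shows "dir_deriv v g x = G v"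
proof -
  have "((\<lambda>t::real. x + t *\<^sub>R v) has_derivative (\<lambda>t. t *\<^sub>R v)) (at 0)"
    by (auto intro!: derivative_eq_intros)
  from diff_chain_at[OF this] g
  have "((\<lambda>t. g (x + t *\<^sub>R v)) has_derivative (\<lambda>t. G (t *\<^sub>R v))) (at 0)"
    by (simp add: o_def)
  then have "((\<lambda>t. g (x + t *\<^sub>R v)) has_vector_derivative G v) (at 0)"
    using linear_scale[OF has_derivative_linear[OF g]] by (simp add: has_vector_derivative_def)
  then show ?thesis unfolding dir_deriv_def by (rule vector_derivative_at)
qed

lemma dir_deriv_poly_fun: "f \<in> poly_fun \<Longrightarrow> dir_deriv v f = (\<lambda>x. frechet_derivative f (at x) v)"
  using dir_deriv_eq_has_derivative has_derivative_poly_fun by blast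

lemma poly_fun_dir_deriv: "f \<in> poly_fun \<Longrightarrow> dir_deriv v f \<in> poly_fun"
  by (simp add: dir_deriv_poly_fun poly_fun_frechet_derivative)

lemma dir_deriv_linear_combination:
  assumes "u \<in> poly_fun" and "finite A" and "\<And>a. a \<in> A \<Longrightarrow> w a \<in> poly_fun"
  shows "dir_deriv v (\<lambda>x. u x + (\<Sum>a\<in>A. c a * w a x)) =
    (\<lambda>x. dir_deriv v u x + (\<Sum>a\<in>A. c a * dir_deriv v (w a) x))"
proof
  fix x
  have "((\<lambda>x. u x + (\<Sum>a\<in>A. c a * w a x)) has_derivative
      (\<lambda>h. frechet_derivative u (at x) h + (\<Sum>a\<in>A. c a * frechet_derivative (w a) (at x) h))) (at x)"
    using assms by (intro has_derivative_add has_derivative_sum has_derivative_mult_right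
        has_derivative_poly_fun)
  then show "dir_deriv v (\<lambda>x. u x + (\<Sum>a\<in>A. c a * w a x)) x =
      dir_deriv v u x + (\<Sum>a\<in>A. c a * dir_deriv v (w a) x)"
    using assms by (simp add: dir_deriv_eq_has_derivative dir_deriv_poly_fun)
qed

lemma dir_deriv_add:
  "f \<in> poly_fun \<Longrightarrow> g \<in> poly_fun \<Longrightarrow>
    dir_deriv v (\<lambda>x. f x + g x) = (\<lambda>x. dir_deriv v f x + dir_deriv v g x)"
  by (rule ext, subst dir_deriv_eq_has_derivative[OF has_derivative_add[OF
        has_derivative_poly_fun has_derivative_poly_fun]]) (auto simp: dir_deriv_poly_fun)

lemma dir_deriv_mult:
  "f \<in> poly_fun \<Longrightarrow> g \<in> poly_fun \<Longrightarrow>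
    dir_deriv v (\<lambda>x. f x * g x) = (\<lambda>x. dir_deriv v f x * g x + f x * dir_deriv v g x)"
  by (rule ext, subst dir_deriv_eq_has_derivative[OF has_derivative_mult[OF
        has_derivative_poly_fun has_derivative_poly_fun]]) (auto simp: dir_deriv_poly_fun)

lemma dir_deriv_const: "dir_deriv v (\<lambda>x. c) = (\<lambda>x. 0)"
  by (rule ext, subst dir_deriv_eq_has_derivative[OF has_derivative_const]) auto

lemma dir_deriv_coord: "dir_deriv v (\<lambda>x::real^'n. complex_of_real (x $ i)) = (\<lambda>x. complex_of_real (v $ i))"
proof
  fix x :: "real^'n"
  have "((\<lambda>x::real^'n. x $ i) has_derivative (\<lambda>x. x $ i)) (at x)"
    by (rule bounded_linear_imp_has_derivative) auto
  then show "dir_deriv v (\<lambda>x. complex_of_real (x $ i)) x = complex_of_real (v $ i)"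
    by (subst dir_deriv_eq_has_derivative[OF has_derivative_of_real]) auto
qed

lemma dir_deriv_commute: "f \<in> poly_fun \<Longrightarrow> dir_deriv v (dir_deriv w f) = dir_deriv w (dir_deriv v f)"
proof (induction arbitrary: v w rule: poly_fun.induct)
  case (mult f g)
  then show ?case
    by (simp add: dir_deriv_add dir_deriv_mult poly_fun_dir_deriv poly_fun.mult algebra_simps)
qed (simp_all add: dir_deriv_const dir_deriv_coord dir_deriv_add poly_fun_dir_deriv)

lemma poly_fun_eq_zero_if_inner_mult_eq_zero:
  assumes "\<alpha> \<noteq> 0" and h: "h \<in> poly_fun" and zero: "\<And>x. complex_of_real (x \<bullet> \<alpha>) * h x = 0"
  shows "h x = 0"
proof (cases "x \<bullet> \<alpha> = 0")
  case False
  then show ?thesis using zero[of x] by simp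
next
  case True
  define y where "y n = x + inverse (real (Suc n)) *\<^sub>R \<alpha>" for n
  have "(\<lambda>n. inverse (real (Suc n)) *\<^sub>R \<alpha>) \<longlonglongrightarrow> 0 *\<^sub>R \<alpha>"
    by (intro tendsto_scaleR tendsto_const LIMSEQ_inverse_real_of_nat)
  then have "y \<longlonglongrightarrow> x + 0 *\<^sub>R \<alpha>"
    unfolding y_def by (intro tendsto_add tendsto_const)
  then have "y \<longlonglongrightarrow> x" by simp
  moreover have "isCont h x"
    using has_derivative_poly_fun[OF h] has_derivative_continuous by blast
  ultimately have "(\<lambda>n. h (y n)) \<longlonglongrightarrow> h x"
    using isCont_tendsto_compose by blast
  moreover have "h (y n) = 0" for n
  proof -
    have "y n \<bullet> \<alpha> = inverse (real (Suc n)) * (\<alpha> \<bullet> \<alpha>)"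
      using True by (simp add: y_def inner_add_left)
    then have "y n \<bullet> \<alpha> \<noteq> 0" using \<open>\<alpha> \<noteq> 0\<close> by simp
    then show ?thesis using zero[of "y n"] by simp
  qed
  ultimately show ?thesis by (simp add: LIMSEQ_const_iff)
qed

lemma tau_root_linear: "linear (tau_root \<alpha>)"
  by (rule linearI)
    (auto simp: tau_root_def inner_add_left algebra_simps add_divide_distrib scaleR_add_left)

lemma inner_tau_root_orthogonal: "\<alpha> \<bullet> \<beta> = 0 \<Longrightarrow> tau_root \<alpha> x \<bullet> \<beta> = x \<bullet> \<beta>"
  by (simp add: tau_root_def inner_diff_left)

lemma tau_root_commute: "\<alpha> \<bullet> \<beta> = 0 \<Longrightarrow> tau_root \<beta> (tau_root \<alpha> x) = tau_root \<alpha> (tau_root \<beta> x)"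
  by (simp add: tau_root_def inner_diff_left inner_commute algebra_simps)

lemma poly_fun_diff_tau_root_divisible:
  "f \<in> poly_fun \<Longrightarrow> \<exists>g\<in>poly_fun. \<forall>x. f x - f (tau_root \<alpha> x) = complex_of_real (x \<bullet> \<alpha>) * g x"
proof (induction rule: poly_fun.induct)
  case (const c)
  then show ?case using poly_fun.const[of 0] by auto
next
  case (coord i)
  have "complex_of_real (x $ i) - complex_of_real (tau_root \<alpha> x $ i) =
      complex_of_real (x \<bullet> \<alpha>) * complex_of_real (\<alpha> $ i / (norm \<alpha>)^2)" for x
  proof -
    have "x $ i - tau_root \<alpha> x $ i = (x \<bullet> \<alpha>) * (\<alpha> $ i / (norm \<alpha>)^2)"
      by (simp add: tau_root_def)
    from arg_cong[OF this, of complex_of_real] show ?thesis by simp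
  qed
  then show ?case
    by (intro bexI[of _ "\<lambda>x. complex_of_real (\<alpha> $ i / (norm \<alpha>)^2)"] allI poly_fun.const)
next
  case (add f g)
  then obtain F G where FG: "F \<in> poly_fun" "G \<in> poly_fun"
    "\<forall>x. f x - f (tau_root \<alpha> x) = complex_of_real (x \<bullet> \<alpha>) * F x"
    "\<forall>x. g x - g (tau_root \<alpha> x) = complex_of_real (x \<bullet> \<alpha>) * G x" by blast
  have "f x + g x - (f (tau_root \<alpha> x) + g (tau_root \<alpha> x)) =
      (f x - f (tau_root \<alpha> x)) + (g x - g (tau_root \<alpha> x))" for x
    by (simp add: algebra_simps)
  then have "f x + g x - (f (tau_root \<alpha> x) + g (tau_root \<alpha> x)) =
      complex_of_real (x \<bullet> \<alpha>) * (F x + G x)" for x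
    by (simp only: FG(3)[rule_format] FG(4)[rule_format] distrib_left)
  then show ?case using poly_fun.add[OF FG(1,2)] by (intro bexI[of _ "\<lambda>x. F x + G x"]) auto
next
  case (mult f g)
  then obtain F G where FG: "F \<in> poly_fun" "G \<in> poly_fun"
    "\<forall>x. f x - f (tau_root \<alpha> x) = complex_of_real (x \<bullet> \<alpha>) * F x"
    "\<forall>x. g x - g (tau_root \<alpha> x) = complex_of_real (x \<bullet> \<alpha>) * G x" by blast
  have "f x * g x - f (tau_root \<alpha> x) * g (tau_root \<alpha> x) =
      complex_of_real (x \<bullet> \<alpha>) * (F x * g x + f (tau_root \<alpha> x) * G x)" for x
  proof -
    have "f x * g x - f (tau_root \<alpha> x) * g (tau_root \<alpha> x) =
        (f x - f (tau_root \<alpha> x)) * g x + f (tau_root \<alpha> x) * (g x - g (tau_root \<alpha> x))"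
      by (simp add: algebra_simps)
    also have "\<dots> = (complex_of_real (x \<bullet> \<alpha>) * F x) * g x +
        f (tau_root \<alpha> x) * (complex_of_real (x \<bullet> \<alpha>) * G x)"
      by (simp only: FG(3)[rule_format] FG(4)[rule_format])
    finally show ?thesis by (simp add: algebra_simps)
  qed
  moreover have "(\<lambda>x. F x * g x + f (tau_root \<alpha> x) * G x) \<in> poly_fun"
    using FG(1,2) mult.hyps poly_fun_compose_linear[OF tau_root_linear mult.hyps(1)]
    by (intro poly_fun.add poly_fun.mult)
  ultimately show ?case by (intro bexI[of _ "\<lambda>x. F x * g x + f (tau_root \<alpha> x) * G x"]) auto
qed

lemma diff_quot_eqI:
  assumes "\<alpha> \<noteq> 0" and g: "g \<in> poly_fun"
    and eq: "\<And>x. f x - f (tau_root \<alpha> x) = complex_of_real (x \<bullet> \<alpha>) * g x"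
  shows "diff_quot \<alpha> f = g"
  unfolding diff_quot_def
proof (rule the_equality)
  fix g'
  assume g': "g' \<in> poly_fun \<and>
    (\<forall>x. x \<bullet> \<alpha> \<noteq> 0 \<longrightarrow> g' x = (f x - f (tau_root \<alpha> x)) / complex_of_real (x \<bullet> \<alpha>))"
  have "g' x - g x = 0" for x
  proof (rule poly_fun_eq_zero_if_inner_mult_eq_zero[OF \<open>\<alpha> \<noteq> 0\<close>])
    show "(\<lambda>x. g' x - g x) \<in> poly_fun" using g' g by (intro poly_fun_diff) auto
    show "complex_of_real (y \<bullet> \<alpha>) * (g' y - g y) = 0" for y
      using g' eq[of y] by (cases "y \<bullet> \<alpha> = 0") (auto simp: field_simps)
  qed
  then show "g' = g" by auto
qed (use g eq in simp)

lemma
  assumes "\<alpha> \<noteq> 0" and "f \<in> poly_fun"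
  shows poly_fun_diff_quot: "diff_quot \<alpha> f \<in> poly_fun"
    and diff_quot: "f x - f (tau_root \<alpha> x) = complex_of_real (x \<bullet> \<alpha>) * diff_quot \<alpha> f x"
proof -
  obtain g where "g \<in> poly_fun" "\<forall>x. f x - f (tau_root \<alpha> x) = complex_of_real (x \<bullet> \<alpha>) * g x"
    using poly_fun_diff_tau_root_divisible[OF assms(2)] by blast
  moreover from this have "diff_quot \<alpha> f = g" using diff_quot_eqI[OF assms(1)] by blast
  ultimately show "diff_quot \<alpha> f \<in> poly_fun"
    and "f x - f (tau_root \<alpha> x) = complex_of_real (x \<bullet> \<alpha>) * diff_quot \<alpha> f x" by auto
qed

lemma diff_quot_linear_combination:
  assumes "\<alpha> \<noteq> 0" and u: "u \<in> poly_fun" and "finite A" and w: "\<And>a. a \<in> A \<Longrightarrow> w a \<in> poly_fun"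
  shows "diff_quot \<alpha> (\<lambda>x. u x + (\<Sum>a\<in>A. c a * w a x)) =
    (\<lambda>x. diff_quot \<alpha> u x + (\<Sum>a\<in>A. c a * diff_quot \<alpha> (w a) x))"
proof (rule diff_quot_eqI[OF \<open>\<alpha> \<noteq> 0\<close>])
  show "(\<lambda>x. diff_quot \<alpha> u x + (\<Sum>a\<in>A. c a * diff_quot \<alpha> (w a) x)) \<in> poly_fun"
    using assms by (intro poly_fun.add poly_fun_sum poly_fun_cmult poly_fun_diff_quot)
  fix x
  have "u x + (\<Sum>a\<in>A. c a * w a x) - (u (tau_root \<alpha> x) + (\<Sum>a\<in>A. c a * w a (tau_root \<alpha> x)))
     = (u x - u (tau_root \<alpha> x)) + (\<Sum>a\<in>A. c a * (w a x - w a (tau_root \<alpha> x)))"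
    by (simp add: sum_subtractf right_diff_distrib)
  also have "\<dots> = complex_of_real (x \<bullet> \<alpha>) * diff_quot \<alpha> u x +
      (\<Sum>a\<in>A. c a * (complex_of_real (x \<bullet> \<alpha>) * diff_quot \<alpha> (w a) x))"
    using diff_quot[OF \<open>\<alpha> \<noteq> 0\<close> u] diff_quot[OF \<open>\<alpha> \<noteq> 0\<close> w] by simp
  also have "\<dots> = complex_of_real (x \<bullet> \<alpha>) *
      (diff_quot \<alpha> u x + (\<Sum>a\<in>A. c a * diff_quot \<alpha> (w a) x))"
    by (simp add: distrib_left sum_distrib_left mult.left_commute)
  finally show "u x + (\<Sum>a\<in>A. c a * w a x) - (u (tau_root \<alpha> x) + (\<Sum>a\<in>A. c a * w a (tau_root \<alpha> x))) =
      complex_of_real (x \<bullet> \<alpha>) * (diff_quot \<alpha> u x + (\<Sum>a\<in>A. c a * diff_quot \<alpha> (w a) x))" .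
qed

lemma inner_mult_diff_quot_diff_quot:
  assumes "\<alpha> \<noteq> 0" "\<beta> \<noteq> 0" "\<alpha> \<bullet> \<beta> = 0" and f: "f \<in> poly_fun"
  shows "complex_of_real (x \<bullet> \<beta>) * (complex_of_real (x \<bullet> \<alpha>) * diff_quot \<alpha> (diff_quot \<beta> f) x) =
    (f x - f (tau_root \<beta> x)) - (f (tau_root \<alpha> x) - f (tau_root \<beta> (tau_root \<alpha> x)))"
proof -
  have "complex_of_real (x \<bullet> \<beta>) * (complex_of_real (x \<bullet> \<alpha>) * diff_quot \<alpha> (diff_quot \<beta> f) x) =
      complex_of_real (x \<bullet> \<beta>) * diff_quot \<beta> f x -
      complex_of_real (tau_root \<alpha> x \<bullet> \<beta>) * diff_quot \<beta> f (tau_root \<alpha> x)"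
    using diff_quot[OF \<open>\<alpha> \<noteq> 0\<close> poly_fun_diff_quot[OF \<open>\<beta> \<noteq> 0\<close> f], of x]
    by (simp add: inner_tau_root_orthogonal[OF \<open>\<alpha> \<bullet> \<beta> = 0\<close>] flip: right_diff_distrib)
  then show ?thesis by (simp only: diff_quot[OF \<open>\<beta> \<noteq> 0\<close> f, symmetric])
qed

lemma diff_quot_commute:
  assumes "\<alpha> \<noteq> 0" "\<beta> \<noteq> 0" "\<alpha> \<bullet> \<beta> = 0" and f: "f \<in> poly_fun"
  shows "diff_quot \<alpha> (diff_quot \<beta> f) = diff_quot \<beta> (diff_quot \<alpha> f)"
proof -
  define A where "A = diff_quot \<alpha> (diff_quot \<beta> f)"
  define B where "B = diff_quot \<beta> (diff_quot \<alpha> f)"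
  have AB: "(\<lambda>x. A x - B x) \<in> poly_fun"
    unfolding A_def B_def using assms by (intro poly_fun_diff poly_fun_diff_quot)
  have "complex_of_real (x \<bullet> \<beta>) * (A x - B x) = 0" for x
  proof (rule poly_fun_eq_zero_if_inner_mult_eq_zero[OF \<open>\<alpha> \<noteq> 0\<close>])
    show "(\<lambda>x. complex_of_real (x \<bullet> \<beta>) * (A x - B x)) \<in> poly_fun"
      using AB by (intro poly_fun.mult poly_fun_inner)
    fix y
    have "\<beta> \<bullet> \<alpha> = 0" using \<open>\<alpha> \<bullet> \<beta> = 0\<close> by (simp add: inner_commute)
    have "complex_of_real (y \<bullet> \<alpha>) * (complex_of_real (y \<bullet> \<beta>) * (A y - B y)) =
        complex_of_real (y \<bullet> \<beta>) * (complex_of_real (y \<bullet> \<alpha>) * A y) -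
        complex_of_real (y \<bullet> \<alpha>) * (complex_of_real (y \<bullet> \<beta>) * B y)"
      by (simp add: algebra_simps)
    also have "\<dots> = 0"
      unfolding A_def B_def inner_mult_diff_quot_diff_quot[OF assms]
        inner_mult_diff_quot_diff_quot[OF \<open>\<beta> \<noteq> 0\<close> \<open>\<alpha> \<noteq> 0\<close> \<open>\<beta> \<bullet> \<alpha> = 0\<close> f]
        tau_root_commute[OF \<open>\<alpha> \<bullet> \<beta> = 0\<close>]
      by (simp add: algebra_simps)
    finally show "complex_of_real (y \<bullet> \<alpha>) * (complex_of_real (y \<bullet> \<beta>) * (A y - B y)) = 0" .
  qed
  then have "A x - B x = 0" for x
    by (rule poly_fun_eq_zero_if_inner_mult_eq_zero[OF \<open>\<beta> \<noteq> 0\<close> AB])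
  then show ?thesis unfolding A_def B_def by auto
qed

text \<open>Differentiating \<open>f y - f (\<tau>\<^sub>\<alpha> y) = \<langle>y,\<alpha>\<rangle> D\<^sub>\<alpha> f y\<close> in direction \<open>v\<close> and comparing
  with \<open>D\<^sub>\<alpha> (\<partial>\<^sub>v f)\<close>, everything cancels except the terms coming from
  \<open>v - \<tau>\<^sub>\<alpha> v = \<langle>v,\<alpha>\<rangle>/|\<alpha>|\<^sup>2 \<alpha>\<close> and from the derivative of \<open>\<langle>y,\<alpha>\<rangle>\<close>.\<close>

lemma inner_mult_dir_deriv_diff_quot_commutator:
  assumes "\<alpha> \<noteq> 0" and f: "f \<in> poly_fun"
  shows "complex_of_real (y \<bullet> \<alpha>) *
      (dir_deriv v (diff_quot \<alpha> f) y - diff_quot \<alpha> (dir_deriv v f) y) =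
    complex_of_real (v \<bullet> \<alpha>) * (complex_of_real (1 / (norm \<alpha>)^2) *
      frechet_derivative f (at (tau_root \<alpha> y)) \<alpha> - diff_quot \<alpha> f y)"
proof -
  let ?D = "diff_quot \<alpha> f" and ?Df = "\<lambda>x. frechet_derivative f (at x)"
  have D: "?D \<in> poly_fun" using poly_fun_diff_quot assms by blast
  have "((\<lambda>y. f y - f (tau_root \<alpha> y)) has_derivative
      (\<lambda>h. ?Df y h - ?Df (tau_root \<alpha> y) (tau_root \<alpha> h))) (at y)"
    using has_derivative_diff[OF has_derivative_poly_fun[OF f] diff_chain_at[OF
          linear_imp_has_derivative[OF tau_root_linear] has_derivative_poly_fun[OF f]]]
    by (simp add: o_def)
  moreover have "(\<lambda>y. f y - f (tau_root \<alpha> y)) = (\<lambda>y. complex_of_real (y \<bullet> \<alpha>) * ?D y)"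
    using diff_quot[OF assms] by blast
  moreover have "((\<lambda>y. complex_of_real (y \<bullet> \<alpha>) * ?D y) has_derivative
      (\<lambda>h. complex_of_real (y \<bullet> \<alpha>) * frechet_derivative ?D (at y) h +
        complex_of_real (h \<bullet> \<alpha>) * ?D y)) (at y)"
    by (rule has_derivative_mult[OF has_derivative_of_real[OF has_derivative_inner_left[OF
            has_derivative_ident]] has_derivative_poly_fun[OF D]])
  ultimately have "(\<lambda>h. ?Df y h - ?Df (tau_root \<alpha> y) (tau_root \<alpha> h)) =
      (\<lambda>h. complex_of_real (y \<bullet> \<alpha>) * frechet_derivative ?D (at y) h +
        complex_of_real (h \<bullet> \<alpha>) * ?D y)"
    using has_derivative_unique by simp
  then have "?Df y v - ?Df (tau_root \<alpha> y) (tau_root \<alpha> v) =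
      complex_of_real (y \<bullet> \<alpha>) * dir_deriv v ?D y + complex_of_real (v \<bullet> \<alpha>) * ?D y"
    by (simp add: dir_deriv_poly_fun[OF D] fun_eq_iff)
  moreover have "?Df y v - ?Df (tau_root \<alpha> y) v =
      complex_of_real (y \<bullet> \<alpha>) * diff_quot \<alpha> (dir_deriv v f) y"
    using diff_quot[OF \<open>\<alpha> \<noteq> 0\<close> poly_fun_dir_deriv[OF f], of v y]
    by (simp add: dir_deriv_poly_fun[OF f])
  moreover have "?Df (tau_root \<alpha> y) (tau_root \<alpha> v) =
      ?Df (tau_root \<alpha> y) v - complex_of_real ((v \<bullet> \<alpha>) / (norm \<alpha>)^2) * ?Df (tau_root \<alpha> y) \<alpha>"
    using linear_diff[OF has_derivative_linear[OF has_derivative_poly_fun[OF f]]]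
      linear_scale[OF has_derivative_linear[OF has_derivative_poly_fun[OF f]]]
    by (simp add: tau_root_def scaleR_conv_of_real)
  ultimately show ?thesis by (simp add: algebra_simps)
qed

lemma dir_deriv_diff_quot_commutator_symmetric:
  assumes "\<alpha> \<noteq> 0" and f: "f \<in> poly_fun"
  shows "complex_of_real (\<alpha> \<bullet> \<eta>) * dir_deriv \<xi> (diff_quot \<alpha> f) x +
      complex_of_real (\<alpha> \<bullet> \<xi>) * diff_quot \<alpha> (dir_deriv \<eta> f) x =
    complex_of_real (\<alpha> \<bullet> \<xi>) * dir_deriv \<eta> (diff_quot \<alpha> f) x +
      complex_of_real (\<alpha> \<bullet> \<eta>) * diff_quot \<alpha> (dir_deriv \<xi> f) x"
proof -
  let ?C = "\<lambda>v y. dir_deriv v (diff_quot \<alpha> f) y - diff_quot \<alpha> (dir_deriv v f) y"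
  have "complex_of_real (\<alpha> \<bullet> \<eta>) * ?C \<xi> x - complex_of_real (\<alpha> \<bullet> \<xi>) * ?C \<eta> x = 0"
  proof (rule poly_fun_eq_zero_if_inner_mult_eq_zero[OF \<open>\<alpha> \<noteq> 0\<close>])
    show "(\<lambda>x. complex_of_real (\<alpha> \<bullet> \<eta>) * ?C \<xi> x - complex_of_real (\<alpha> \<bullet> \<xi>) * ?C \<eta> x) \<in> poly_fun"
      using assms by (intro poly_fun_diff poly_fun_cmult poly_fun_dir_deriv poly_fun_diff_quot)
    fix y
    have "complex_of_real (y \<bullet> \<alpha>) *
        (complex_of_real (\<alpha> \<bullet> \<eta>) * ?C \<xi> y - complex_of_real (\<alpha> \<bullet> \<xi>) * ?C \<eta> y) =
      complex_of_real (\<alpha> \<bullet> \<eta>) * (complex_of_real (y \<bullet> \<alpha>) * ?C \<xi> y) -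
      complex_of_real (\<alpha> \<bullet> \<xi>) * (complex_of_real (y \<bullet> \<alpha>) * ?C \<eta> y)"
      by (simp add: algebra_simps)
    also have "\<dots> = 0"
      unfolding inner_mult_dir_deriv_diff_quot_commutator[OF assms] by (simp add: inner_commute)
    finally show "complex_of_real (y \<bullet> \<alpha>) *
        (complex_of_real (\<alpha> \<bullet> \<eta>) * ?C \<xi> y - complex_of_real (\<alpha> \<bullet> \<xi>) * ?C \<eta> y) = 0" .
  qed
  then show ?thesis by (simp add: algebra_simps)
qed

lemma dunkl_T_dunkl_T:
  assumes "finite A" "0 \<notin> A" and f: "f \<in> poly_fun"
  shows "dunkl_T \<kappa> A \<xi> (dunkl_T \<kappa> A \<eta> f) x =
    dir_deriv \<xi> (dir_deriv \<eta> f) x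
    + (\<Sum>\<alpha>\<in>A. \<kappa> \<alpha> * (complex_of_real (\<alpha> \<bullet> \<eta>) * dir_deriv \<xi> (diff_quot \<alpha> f) x
        + complex_of_real (\<alpha> \<bullet> \<xi>) * diff_quot \<alpha> (dir_deriv \<eta> f) x))
    + (\<Sum>\<beta>\<in>A. \<Sum>\<alpha>\<in>A. (\<kappa> \<beta> * complex_of_real (\<beta> \<bullet> \<xi>)) * (\<kappa> \<alpha> * complex_of_real (\<alpha> \<bullet> \<eta>))
        * diff_quot \<beta> (diff_quot \<alpha> f) x)"
proof -
  have nz: "\<alpha> \<noteq> 0" if "\<alpha> \<in> A" for \<alpha> using that \<open>0 \<notin> A\<close> by auto
  have T: "dunkl_T \<kappa> A v g =
      (\<lambda>x. dir_deriv v g x + (\<Sum>\<alpha>\<in>A. (\<kappa> \<alpha> * complex_of_real (\<alpha> \<bullet> v)) * diff_quot \<alpha> g x))"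
    for v g by (simp add: dunkl_T_def fun_eq_iff)
  have "dunkl_T \<kappa> A \<xi> (dunkl_T \<kappa> A \<eta> f) x =
      dir_deriv \<xi> (dir_deriv \<eta> f) x
      + (\<Sum>\<alpha>\<in>A. (\<kappa> \<alpha> * complex_of_real (\<alpha> \<bullet> \<eta>)) * dir_deriv \<xi> (diff_quot \<alpha> f) x)
      + (\<Sum>\<beta>\<in>A. (\<kappa> \<beta> * complex_of_real (\<beta> \<bullet> \<xi>)) * (diff_quot \<beta> (dir_deriv \<eta> f) x
         + (\<Sum>\<alpha>\<in>A. (\<kappa> \<alpha> * complex_of_real (\<alpha> \<bullet> \<eta>)) * diff_quot \<beta> (diff_quot \<alpha> f) x)))"
    using assms nz
    by (simp add: T[of \<xi>] T[of \<eta>] dir_deriv_linear_combination diff_quot_linear_combination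
        poly_fun_dir_deriv poly_fun_diff_quot)
  then show ?thesis
    by (simp add: sum.distrib sum_distrib_left distrib_left algebra_simps)
qed

lemma dunkl_T_commute:
  assumes "finite A" "0 \<notin> A" "pairwise orthogonal A" and f: "f \<in> poly_fun"
  shows "dunkl_T \<kappa> A \<xi> (dunkl_T \<kappa> A \<eta> f) = dunkl_T \<kappa> A \<eta> (dunkl_T \<kappa> A \<xi> f)"
proof
  fix x
  have nz: "\<alpha> \<noteq> 0" if "\<alpha> \<in> A" for \<alpha> using that \<open>0 \<notin> A\<close> by auto
  have dq_commute: "diff_quot \<beta> (diff_quot \<alpha> f) = diff_quot \<alpha> (diff_quot \<beta> f)"
    if "\<alpha> \<in> A" "\<beta> \<in> A" for \<alpha> \<beta>
    using that assms(3) diff_quot_commute[OF nz nz _ f]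
    by (cases "\<alpha> = \<beta>") (auto simp: pairwise_def orthogonal_def)
  have "(\<Sum>\<beta>\<in>A. \<Sum>\<alpha>\<in>A. (\<kappa> \<beta> * complex_of_real (\<beta> \<bullet> \<xi>)) * (\<kappa> \<alpha> * complex_of_real (\<alpha> \<bullet> \<eta>))
        * diff_quot \<beta> (diff_quot \<alpha> f) x) =
      (\<Sum>\<beta>\<in>A. \<Sum>\<alpha>\<in>A. (\<kappa> \<beta> * complex_of_real (\<beta> \<bullet> \<eta>)) * (\<kappa> \<alpha> * complex_of_real (\<alpha> \<bullet> \<xi>))
        * diff_quot \<beta> (diff_quot \<alpha> f) x)"
    by (subst (2) sum.swap) (intro sum.cong refl, simp add: dq_commute)
  moreover have "(\<Sum>\<alpha>\<in>A. \<kappa> \<alpha> * (complex_of_real (\<alpha> \<bullet> \<eta>) * dir_deriv \<xi> (diff_quot \<alpha> f) x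
        + complex_of_real (\<alpha> \<bullet> \<xi>) * diff_quot \<alpha> (dir_deriv \<eta> f) x)) =
      (\<Sum>\<alpha>\<in>A. \<kappa> \<alpha> * (complex_of_real (\<alpha> \<bullet> \<xi>) * dir_deriv \<eta> (diff_quot \<alpha> f) x
        + complex_of_real (\<alpha> \<bullet> \<eta>) * diff_quot \<alpha> (dir_deriv \<xi> f) x))"
    using dir_deriv_diff_quot_commutator_symmetric[OF nz f] by simp
  ultimately show "dunkl_T \<kappa> A \<xi> (dunkl_T \<kappa> A \<eta> f) x = dunkl_T \<kappa> A \<eta> (dunkl_T \<kappa> A \<xi> f) x"
    using assms by (simp add: dunkl_T_dunkl_T dir_deriv_commute[OF f])
qed

lemma positive_orthogonal_subsystem_pairwise_orthogonal:
  assumes "root_system R" and "positive_orthogonal_subsystem R' R"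
  shows "finite R'" "0 \<notin> R'" "pairwise orthogonal R'"
proof -
  obtain R'' where R'': "orthogonal_subsystem R'' R" "R' \<subseteq> R''" "R' \<inter> uminus ` R' = {}"
    using assms(2) unfolding positive_orthogonal_subsystem_def by blast
  have "R' \<subseteq> R" and orth: "\<forall>\<alpha>\<in>R''. \<forall>\<beta>\<in>R''. \<beta> \<noteq> \<alpha> \<and> \<beta> \<noteq> -\<alpha> \<longrightarrow> \<alpha> \<bullet> \<beta> = 0"
    using R''(1,2) unfolding orthogonal_subsystem_def subsystem_def by auto
  moreover have "finite R" "0 \<notin> R" using assms(1) unfolding root_system_def by auto
  ultimately show "finite R'" "0 \<notin> R'" using finite_subset by auto
  show "pairwise orthogonal R'"
  proof (rule pairwiseI)
    fix \<alpha> \<beta> assume "\<alpha> \<in> R'" "\<beta> \<in> R'" "\<alpha> \<noteq> \<beta>"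
    moreover have "\<beta> \<noteq> - \<alpha>" using \<open>\<alpha> \<in> R'\<close> \<open>\<beta> \<in> R'\<close> R''(3) by blast
    ultimately show "orthogonal \<alpha> \<beta>"
      using R''(2) orth[rule_format, of \<alpha> \<beta>] by (auto simp: orthogonal_def)
  qed
qed

theorem theorem3p1:
  fixes R R' :: "(real^'n) set" and \<kappa> :: "real^'n \<Rightarrow> complex" and \<xi> \<eta> :: "real^'n"
    and f :: "real^'n \<Rightarrow> complex"
  assumes "root_system R"
    and "positive_orthogonal_subsystem R' R"
    and "f \<in> poly_fun"
  shows "dunkl_T \<kappa> R' \<xi> (dunkl_T \<kappa> R' \<eta> f) = dunkl_T \<kappa> R' \<eta> (dunkl_T \<kappa> R' \<xi> f)"
  using dunkl_T_commute[OF positive_orthogonal_subsystem_pairwise_orthogonal[OF assms(1,2)] assms(3)] .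

end
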